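(* Let $k$ be a field, $d_1,\ldots,d_n$ positive integers, $A=k[x_1, \ldots, x_n]/(x_1^{d_1}, \ldots, x_n^{d_n})$, and suppose that $t=\sum_{i=1}^n(d_i-1)$ is odd. If $A$ has the weak Lefschetz property, then so does $A[x]/(x^2)$, where $x$ is a new variable of degree $1$.
   Context: Algebras are graded by degree, $A=\bigoplus_{i\ge0}A_i$. A graded artinian algebra $A$ has the weak Lefschetz property if there is a linear form $\ell\in A_1$ such that for every $i$ the map $A_i\to A_{i+1}$, $a\mapsto \ell a$, is injective or surjective. *)

theory Defs
  imports Main
begin

text \<open>The monomial complete intersection A = k[x_1..x_n]/(x_1^d_1,...,x_n^d_n),
  with ds = [d_1,...,d_n], is represented through its standard monomial basis:
  the monomials x^a with 0 <= a_j < d_j. An element of A is a coefficient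
  function on exponent vectors (nat lists of length n) vanishing off the basis.\<close>

definition is_mon :: "nat list \<Rightarrow> nat list \<Rightarrow> bool" where
  "is_mon ds a \<longleftrightarrow> length a = length ds \<and> (\<forall>j<length ds. a ! j < ds ! j)"

definition mons :: "nat list \<Rightarrow> nat \<Rightarrow> nat list set" where
  "mons ds i = {a. is_mon ds a \<and> sum_list a = i}"

definition graded_piece :: "nat list \<Rightarrow> nat \<Rightarrow> (nat list \<Rightarrow> 'k::zero) set" where
  "graded_piece ds i = {f. \<forall>a. a \<notin> mons ds i \<longrightarrow> f a = 0}"

text \<open>Multiplication by the linear form l = sum_j c_j x_j in A:
  the coefficient of x^b in l*f is the sum over j with b_j > 0 of
  c_j times the coefficient of x^(b - e_j) in f; monomials outside the basis vanish.\<close>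
definition lin_mult :: "nat list \<Rightarrow> (nat \<Rightarrow> 'k::comm_ring_1) \<Rightarrow> (nat list \<Rightarrow> 'k) \<Rightarrow> nat list \<Rightarrow> 'k" where
  "lin_mult ds c f b =
     (if is_mon ds b
      then (\<Sum>j<length ds. if 0 < b ! j then c j * f (b[j := b ! j - 1]) else 0)
      else 0)"

definition has_WLP :: "'k::field itself \<Rightarrow> nat list \<Rightarrow> bool" where
  "has_WLP _ ds \<longleftrightarrow>
     (\<exists>c :: nat \<Rightarrow> 'k. \<forall>i.
        inj_on (lin_mult ds c) (graded_piece ds i) \<or>
        lin_mult ds c ` graded_piece ds i = graded_piece ds (Suc i))"

end

theory Submission
  imports Defs "HOL.Vector_Spaces" "HOL-Library.Function_Algebras"
begin

text \<open>Let \<open>t = 2m + 1\<close> be the socle degree of \<open>A\<close> and \<open>\<ell>\<close> a Lefschetz element.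
  The Hilbert function of \<open>A\<close> is symmetric, so \<open>dim A\<^sub>m = dim A\<^sub>m\<^sub>+\<^sub>1\<close> and
  \<open>\<times>\<ell> : A\<^sub>m \<rightarrow> A\<^sub>m\<^sub>+\<^sub>1\<close> is bijective. Since \<open>\<times>\<ell>\<close> commutes with every \<open>\<times>x\<^sub>k\<close>, injectivity
  propagates downwards (an element below the socle degree killed by all \<open>x\<^sub>k\<close> is zero) and
  surjectivity upwards (\<open>A\<^sub>j\<^sub>+\<^sub>1\<close> is spanned by \<open>x\<^sub>k A\<^sub>j\<close>). Hence \<open>\<times>\<ell>\<close> is injective in
  degrees \<open>\<le> m\<close> and surjective in degrees \<open>\<ge> m\<close>. Writing elements of \<open>A[x]/(x\<^sup>2)\<close> as
  \<open>a + x b\<close>, multiplication by \<open>\<ell> + x\<close> is \<open>(a, b) \<mapsto> (\<ell> a, \<ell> b + a)\<close>; this map is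
  injective in degree \<open>i\<close> when \<open>\<times>\<ell>\<close> is injective in degrees \<open>i - 1\<close> and \<open>i\<close>, and surjective
  in degree \<open>i + 1\<close> when \<open>\<times>\<ell>\<close> is surjective in degrees \<open>i\<close> and \<open>i + 1\<close>.\<close>

context vector_space begin

lemma linear_inj_on_span_iff_surj:
  assumes fE: "finite E" and fF: "finite F" and iE: "independent E" and iF: "independent F"
    and card: "card E = card F" and lin: "Vector_Spaces.linear scale scale f"
    and sub: "f ` span E \<subseteq> span F"
  shows "inj_on f (span E) \<longleftrightarrow> f ` span E = span F"
proof
  interpret lf: module_hom scale scale f using lin by (simp add: module_hom_iff_linear)
  assume inj: "inj_on f (span E)"
  have ind: "independent (f ` E)" using lf.independent_injective_image iE inj by blast
  have card_fE: "card (f ` E) = card F" using inj card by (metis card_image inj_on_subset span_superset)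
  have "span F \<subseteq> span (f ` E)"
  proof
    fix w assume w: "w \<in> span F"
    show "w \<in> span (f ` E)"
    proof (rule ccontr)
      assume nw: "w \<notin> span (f ` E)"
      then have "independent (insert w (f ` E))" using independent_insertI ind by blast
      moreover have "insert w (f ` E) \<subseteq> span F" using w sub span_superset by blast
      ultimately have "card (insert w (f ` E)) \<le> card F" using independent_span_bound fF by blast
      moreover have "w \<notin> f ` E" using nw span_superset by blast
      ultimately show False using card_fE fE by simp
    qed
  qed
  then show "f ` span E = span F" using sub lf.span_image by auto
next
  interpret lf: module_hom scale scale f using lin by (simp add: module_hom_iff_linear)
  assume surj: "f ` span E = span F"
  have "v = 0" if v: "v \<in> span E" "f v = 0" for v
  proof (rule ccontr)
    assume "v \<noteq> 0"
    then have "independent {v}" by (simp add: independent_insert)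
    then obtain B where B: "{v} \<subseteq> B" "B \<subseteq> span E" "independent B" "span E \<subseteq> span B"
      using maximal_independent_subset_extend[of "{v}" "span E"] v(1) by blast
    have fB: "finite B" and card_B: "card B \<le> card E"
      using independent_span_bound[OF fE B(3) B(2)] by auto
    have "span F \<subseteq> f ` span B" using surj B(4) by blast
    also have "\<dots> = span (f ` B)" using lf.span_image by simp
    also have "f ` B = insert 0 (f ` (B - {v}))" using B(1) v(2) by auto
    finally have "F \<subseteq> span (f ` (B - {v}))" using span_superset by auto
    then have "card F \<le> card (f ` (B - {v}))" using independent_span_bound iF fB by blast
    also have "\<dots> \<le> card (B - {v})" using fB card_image_le by blast
    also have "\<dots> < card B" using fB B(1) by (meson card_Diff1_less singletonI subset_iff)
    finally show False using card_B card by simp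
  qed
  then show "inj_on f (span E)" using lf.inj_on_iff_eq_0 subspace_span by blast
qed

end

section \<open>Coefficient functions as a vector space\<close>

definition scale_fun :: "'k::field \<Rightarrow> ('a \<Rightarrow> 'k) \<Rightarrow> 'a \<Rightarrow> 'k" where
  "scale_fun r f = (\<lambda>x. r * f x)"

lemma vector_space_scale_fun: "vector_space (scale_fun :: 'k::field \<Rightarrow> ('a \<Rightarrow> 'k) \<Rightarrow> 'a \<Rightarrow> 'k)"
  by unfold_locales (auto simp: scale_fun_def fun_eq_iff algebra_simps)

interpretation fun_vs: vector_space "scale_fun :: 'k::field \<Rightarrow> ('a \<Rightarrow> 'k) \<Rightarrow> 'a \<Rightarrow> 'k"
  by (rule vector_space_scale_fun)

lemma module_hom_scale_funI:
  assumes "\<And>f g. F (f + g) = F f + F g" and "\<And>r f. F (scale_fun r f) = scale_fun r (F f)"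
  shows "module_hom (scale_fun :: 'k::field \<Rightarrow> ('a \<Rightarrow> 'k) \<Rightarrow> 'a \<Rightarrow> 'k)
           (scale_fun :: 'k \<Rightarrow> ('b \<Rightarrow> 'k) \<Rightarrow> 'b \<Rightarrow> 'k) F"
  using assms vector_space_scale_fun[where 'a='a and 'k='k] vector_space_scale_fun[where 'a='b and 'k='k]
  by (auto simp: module_hom_def module_hom_axioms_def module_iff_vector_space)

lemma sum_fun_apply: "(\<Sum>j\<in>A. F j) x = (\<Sum>j\<in>A. F j x)"
  by (induction A rule: infinite_finite_induct) auto

definition delta :: "'a \<Rightarrow> 'a \<Rightarrow> 'k::{zero,one}" where
  "delta a = (\<lambda>x. if x = a then 1 else 0)"

lemma inj_delta: "inj (delta :: 'a \<Rightarrow> 'a \<Rightarrow> 'k::zero_neq_one)"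
  by (auto simp: inj_def delta_def fun_eq_iff split: if_splits)

lemma independent_delta: "fun_vs.independent (delta ` S :: ('a \<Rightarrow> 'k::field) set)"
proof -
  have "u v = 0" if T: "finite T" "T \<subseteq> delta ` S" "(\<Sum>w\<in>T. scale_fun (u w) w) = 0" "v \<in> T"
    for T and u :: "('a \<Rightarrow> 'k) \<Rightarrow> 'k" and v
  proof -
    obtain a where a: "v = delta a" using T by blast
    have "0 = (\<Sum>w\<in>T. scale_fun (u w) w) a" using T(3) by simp
    also have "\<dots> = (\<Sum>w\<in>T. u w * w a)" by (simp add: sum_fun_apply scale_fun_def)
    also have "\<dots> = (\<Sum>w\<in>{v}. u w * w a)"
    proof (rule sum.mono_neutral_right)
      show "\<forall>w\<in>T - {v}. u w * w a = 0"
      proof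
        fix w assume w: "w \<in> T - {v}"
        then obtain b where "w = delta b" using T by blast
        with w a show "u w * w a = 0" by (auto simp: delta_def)
      qed
    qed (use T in auto)
    also have "\<dots> = u v" using a by (simp add: delta_def)
    finally show ?thesis by simp
  qed
  then show ?thesis unfolding fun_vs.independent_explicit_module by blast
qed

section \<open>The graded pieces of a monomial complete intersection\<close>

lemma finite_mons: "finite (mons ds i)"
proof -
  have "mons ds i \<subseteq> {xs. set xs \<subseteq> {..<sum_list ds} \<and> length xs = length ds}"
  proof
    fix a assume "a \<in> mons ds i"
    then have a: "length a = length ds" "\<forall>j<length ds. a ! j < ds ! j"
      by (auto simp: mons_def is_mon_def)
    have "x < sum_list ds" if "x \<in> set a" for x
    proof -
      obtain j where j: "j < length a" "x = a ! j" using \<open>x \<in> set a\<close> by (auto simp: in_set_conv_nth)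
      have "ds ! j \<le> sum_list ds" using j a by (simp add: member_le_sum_list)
      then show ?thesis using a j by fastforce
    qed
    then show "a \<in> {xs. set xs \<subseteq> {..<sum_list ds} \<and> length xs = length ds}" using a by auto
  qed
  then show ?thesis using finite_lists_length_eq[of "{..<sum_list ds}"] finite_subset by blast
qed

lemma graded_piece_eq_span:
  "(graded_piece ds i :: (nat list \<Rightarrow> 'k::field) set) = fun_vs.span (delta ` mons ds i)"
proof
  have "fun_vs.subspace (graded_piece ds i :: (nat list \<Rightarrow> 'k) set)"
    by (auto simp: fun_vs.subspace_def graded_piece_def scale_fun_def)
  then show "fun_vs.span (delta ` mons ds i) \<subseteq> (graded_piece ds i :: (nat list \<Rightarrow> 'k) set)"
    by (rule fun_vs.span_minimal[rotated]) (auto simp: graded_piece_def delta_def)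
  show "graded_piece ds i \<subseteq> fun_vs.span (delta ` mons ds i :: (nat list \<Rightarrow> 'k) set)"
  proof
    fix f :: "nat list \<Rightarrow> 'k" assume f: "f \<in> graded_piece ds i"
    have "f = (\<Sum>a\<in>mons ds i. scale_fun (f a) (delta a))"
    proof
      fix x
      have "(\<Sum>a\<in>mons ds i. scale_fun (f a) (delta a)) x = (\<Sum>a\<in>mons ds i. f a * delta a x)"
        by (simp add: sum_fun_apply scale_fun_def)
      also have "\<dots> = f x"
        using f finite_mons[of ds i]
        by (cases "x \<in> mons ds i") (auto simp: graded_piece_def delta_def if_distrib cong: if_cong)
      finally show "f x = (\<Sum>a\<in>mons ds i. scale_fun (f a) (delta a)) x" by simp
    qed
    also have "\<dots> \<in> fun_vs.span (delta ` mons ds i)"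
      by (intro fun_vs.span_sum fun_vs.span_scale fun_vs.span_base) auto
    finally show "f \<in> fun_vs.span (delta ` mons ds i)" .
  qed
qed

lemma graded_piece_subspace: "fun_vs.subspace (graded_piece ds i :: (nat list \<Rightarrow> 'k::field) set)"
  unfolding graded_piece_eq_span by (rule fun_vs.subspace_span)

lemma is_mon_decr: "is_mon ds b \<Longrightarrow> is_mon ds (b[j := b ! j - 1])"
  unfolding is_mon_def
  by (metis (no_types, lifting) length_list_update less_imp_diff_less nth_list_update_eq nth_list_update_neq)

lemma sum_list_decr:
  "k < length (b::nat list) \<Longrightarrow> 0 < b ! k \<Longrightarrow> sum_list b = Suc (sum_list (b[k := b ! k - 1]))"
  using sum_list_update[of k b "b ! k - 1"] elem_le_sum_list[of k b] by simp

definition mult_var :: "nat list \<Rightarrow> nat \<Rightarrow> (nat list \<Rightarrow> 'k::zero) \<Rightarrow> nat list \<Rightarrow> 'k" where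
  "mult_var ds k f b = (if is_mon ds b \<and> 0 < b ! k then f (b[k := b ! k - 1]) else 0)"

lemma lin_mult_eq_sum_mult_var:
  "lin_mult ds c f = (\<Sum>j<length ds. scale_fun (c j) (mult_var ds j f))"
  by (auto simp: fun_eq_iff lin_mult_def sum_fun_apply scale_fun_def mult_var_def intro!: sum.cong)

lemma module_hom_mult_var: "module_hom scale_fun scale_fun (mult_var ds k :: (nat list \<Rightarrow> 'k::field) \<Rightarrow> _)"
  by (rule module_hom_scale_funI) (auto simp: mult_var_def scale_fun_def fun_eq_iff)

lemma module_hom_lin_mult: "module_hom scale_fun scale_fun (lin_mult ds c :: (nat list \<Rightarrow> 'k::field) \<Rightarrow> _)"
  by (rule module_hom_scale_funI)
    (auto simp: lin_mult_def scale_fun_def fun_eq_iff sum.distrib[symmetric] sum_distrib_left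
      algebra_simps intro!: sum.cong)

lemma mult_var_commute: "mult_var ds j (mult_var ds k f) = mult_var ds k (mult_var ds j f)"
proof (cases "j = k")
  case False
  then have "b[j := b ! j - 1, k := b ! k - 1] = b[k := b ! k - 1, j := b ! j - 1]" for b :: "nat list"
    by (rule list_update_swap)
  then show ?thesis using False is_mon_decr[of ds] by (auto simp: mult_var_def fun_eq_iff)
qed simp

lemma lin_mult_mult_var_commute:
  "lin_mult ds c (mult_var ds k f) = mult_var ds k (lin_mult ds c (f :: nat list \<Rightarrow> 'k::field))"
proof -
  interpret xk: module_hom scale_fun scale_fun "mult_var ds k :: (nat list \<Rightarrow> 'k) \<Rightarrow> _"
    by (rule module_hom_mult_var)
  show ?thesis
    unfolding lin_mult_eq_sum_mult_var by (simp add: mult_var_commute xk.sum xk.scale)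
qed

lemma lin_mult_graded: "f \<in> graded_piece ds i \<Longrightarrow> lin_mult ds c f \<in> graded_piece ds (Suc i)"
  by (auto simp: graded_piece_def lin_mult_def mons_def is_mon_def sum_list_decr
      intro!: sum.neutral dest!: is_mon_decr)

lemma mult_var_graded:
  assumes k: "k < length ds" and f: "f \<in> graded_piece ds i" shows "mult_var ds k f \<in> graded_piece ds (Suc i)"
  unfolding graded_piece_def mem_Collect_eq
proof (intro allI impI)
  fix b assume b: "b \<notin> mons ds (Suc i)"
  show "mult_var ds k f b = 0"
  proof (cases "is_mon ds b \<and> 0 < b ! k")
    case True
    then have "b[k := b ! k - 1] \<notin> mons ds i"
      using b k sum_list_decr[of k b] by (auto simp: mons_def is_mon_def)
    then show ?thesis using f by (simp add: graded_piece_def mult_var_def)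
  qed (auto simp add: mult_var_def)
qed

lemma mult_var_delta:
  assumes "is_mon ds b" and "0 < b ! k"
  shows "mult_var ds k (delta (b[k := b ! k - 1])) = (delta b :: nat list \<Rightarrow> 'k::field)"
proof
  fix x
  have "x = b" if "0 < x ! k" "x[k := x ! k - 1] = b[k := b ! k - 1]"
  proof -
    have len: "length x = length b" using arg_cong[OF that(2), of length] by simp
    show ?thesis
    proof (cases "k < length b")
      case True
      then have "x ! k = b ! k"
        using arg_cong[OF that(2), of "\<lambda>l. l ! k"] that(1) assms(2) len by auto
      then show ?thesis by (metis list_update_id list_update_overwrite that(2))
    next
      case False
      then show ?thesis using that(2) len by (simp add: list_update_beyond)
    qed
  qed
  then show "mult_var ds k (delta (b[k := b ! k - 1])) x = delta b x"
    using assms by (auto simp: mult_var_def delta_def)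
qed

text \<open>Below the socle degree every basis monomial can still be multiplied by some variable.\<close>

lemma graded_piece_eq_0_if_mult_var_eq_0:
  assumes f: "f \<in> graded_piece ds j" and j: "j < (\<Sum>d\<leftarrow>ds. d - 1)"
    and killed: "\<forall>k<length ds. mult_var ds k f = 0"
  shows "f = 0"
proof
  fix a
  show "f a = 0 a"
  proof (rule ccontr)
    assume fa: "f a \<noteq> 0 a"
    then have a: "length a = length ds" "\<forall>k<length ds. a ! k < ds ! k" "sum_list a = j"
      using f by (auto simp: graded_piece_def mons_def is_mon_def)
    have "\<exists>k<length ds. Suc (a ! k) < ds ! k"
    proof (rule ccontr)
      assume full: "\<not> (\<exists>k<length ds. Suc (a ! k) < ds ! k)"
      have "a ! k = ds ! k - 1" if "k < length ds" for k
        using a(2) full that by (metis Suc_lessI diff_Suc_1)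
      then have "a = map (\<lambda>d. d - 1) ds" using a(1) by (intro nth_equalityI) auto
      then show False using a(3) j by simp
    qed
    then obtain k where k: "k < length ds" "Suc (a ! k) < ds ! k" by blast
    define b where "b = a[k := Suc (a ! k)]"
    have "is_mon ds b" using k a by (auto simp: b_def is_mon_def nth_list_update)
    moreover have "0 < b ! k" and "b[k := b ! k - 1] = a" using k a by (auto simp: b_def)
    ultimately have "mult_var ds k f b = f a" by (simp add: mult_var_def)
    then show False using killed k fa by simp
  qed
qed

lemma inj_on_lin_mult_downward:
  fixes c :: "nat \<Rightarrow> 'k::field"
  assumes inj: "inj_on (lin_mult ds c) (graded_piece ds (Suc j))"
    and j: "j < (\<Sum>d\<leftarrow>ds. d - 1)"
  shows "inj_on (lin_mult ds c) (graded_piece ds j)"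
proof -
  interpret L: module_hom scale_fun scale_fun "lin_mult ds c" by (rule module_hom_lin_mult)
  have "f = 0" if f: "f \<in> graded_piece ds j" "lin_mult ds c f = 0" for f
  proof -
    have "mult_var ds k f = 0" if k: "k < length ds" for k
    proof -
      interpret Xk: module_hom scale_fun scale_fun "mult_var ds k :: (nat list \<Rightarrow> 'k) \<Rightarrow> _"
        by (rule module_hom_mult_var)
      have "lin_mult ds c (mult_var ds k f) = 0"
        using f(2) by (simp add: lin_mult_mult_var_commute)
      then show ?thesis
        using inj mult_var_graded[OF k f(1)] L.inj_on_iff_eq_0[OF graded_piece_subspace] by blast
    qed
    then show "f = 0" using graded_piece_eq_0_if_mult_var_eq_0[OF f(1) j] by blast
  qed
  then show ?thesis using L.inj_on_iff_eq_0[OF graded_piece_subspace] by blast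
qed

lemma image_lin_mult_upward:
  fixes c :: "nat \<Rightarrow> 'k::field"
  assumes surj: "lin_mult ds c ` graded_piece ds j = graded_piece ds (Suc j)"
  shows "lin_mult ds c ` graded_piece ds (Suc j) = graded_piece ds (Suc (Suc j))"
proof
  interpret L: module_hom scale_fun scale_fun "lin_mult ds c" by (rule module_hom_lin_mult)
  show "lin_mult ds c ` graded_piece ds (Suc j) \<subseteq> graded_piece ds (Suc (Suc j))"
    using lin_mult_graded by blast
  have "(delta b :: nat list \<Rightarrow> 'k) \<in> lin_mult ds c ` graded_piece ds (Suc j)" if b: "b \<in> mons ds (Suc (Suc j))" for b
  proof -
    have b: "is_mon ds b" "sum_list b = Suc (Suc j)" "length b = length ds"
      using b by (auto simp: mons_def is_mon_def)
    then obtain k where k: "k < length ds" "0 < b ! k"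
      by (metis in_set_conv_nth gr_zeroI sum_list_eq_0_iff nat.distinct(1))
    define a where "a = b[k := b ! k - 1]"
    have "a \<in> mons ds (Suc j)"
      using is_mon_decr[OF b(1)] sum_list_decr[of k b] k b by (simp add: a_def mons_def)
    then have "(delta a :: nat list \<Rightarrow> 'k) \<in> graded_piece ds (Suc j)"
      unfolding graded_piece_eq_span by (intro fun_vs.span_base) auto
    then obtain h where h: "h \<in> graded_piece ds j" "delta a = lin_mult ds c h" using surj by blast
    have "(delta b :: nat list \<Rightarrow> 'k) = mult_var ds k (delta a)" unfolding a_def by (rule mult_var_delta[OF b(1) k(2), symmetric])
    also have "\<dots> = lin_mult ds c (mult_var ds k h)" by (simp add: h(2) lin_mult_mult_var_commute)
    finally show ?thesis using mult_var_graded[OF k(1) h(1)] by blast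
  qed
  then show "graded_piece ds (Suc (Suc j)) \<subseteq> lin_mult ds c ` graded_piece ds (Suc j)"
    unfolding graded_piece_eq_span[of ds "Suc (Suc j)"]
    by (intro fun_vs.span_minimal L.subspace_image[OF graded_piece_subspace]) auto
qed

text \<open>The involution \<open>x\<^sup>a \<mapsto> x\<^sup>d\<^sup>-\<^sup>1\<^sup>-\<^sup>a\<close> of the monomial basis; it makes the Hilbert function symmetric.\<close>

definition mon_complement :: "nat list \<Rightarrow> nat list \<Rightarrow> nat list" where
  "mon_complement ds a = map (\<lambda>j. ds ! j - 1 - a ! j) [0..<length ds]"

lemma sum_list_mon_complement:
  assumes "is_mon ds a"
  shows "sum_list a + sum_list (mon_complement ds a) = (\<Sum>d\<leftarrow>ds. d - 1)"
proof -
  have a: "length a = length ds" "\<forall>j<length ds. a ! j < ds ! j" using assms by (auto simp: is_mon_def)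
  have "sum_list a + sum_list (mon_complement ds a)
      = (\<Sum>j<length ds. a ! j) + (\<Sum>j<length ds. ds ! j - 1 - a ! j)"
    by (simp add: sum_list_sum_nth a(1) mon_complement_def atLeast0LessThan
        sum_set_upt_conv_sum_list_nat[symmetric])
  also have "\<dots> = (\<Sum>j<length ds. ds ! j - 1)"
    unfolding sum.distrib[symmetric] using a(2) by (intro sum.cong) auto
  also have "\<dots> = (\<Sum>d\<leftarrow>ds. d - 1)"
    by (simp add: sum_list_sum_nth atLeast0LessThan)
  finally show ?thesis .
qed

lemma bij_betw_mon_complement:
  assumes pos: "\<forall>d\<in>set ds. 0 < d" and ij: "i + j = (\<Sum>d\<leftarrow>ds. d - 1)"
  shows "bij_betw (mon_complement ds) (mons ds i) (mons ds j)"
proof (rule bij_betw_byWitness[where f' = "mon_complement ds"])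
  have is_mon: "is_mon ds (mon_complement ds a)" for a
    using pos by (auto simp: is_mon_def mon_complement_def)
  have involution: "mon_complement ds (mon_complement ds a) = a" if "is_mon ds a" for a
    using that by (auto simp: is_mon_def mon_complement_def intro!: nth_equalityI)
  show "\<forall>a\<in>mons ds i. mon_complement ds (mon_complement ds a) = a"
    and "\<forall>a\<in>mons ds j. mon_complement ds (mon_complement ds a) = a"
    using involution by (auto simp: mons_def)
  show "mon_complement ds ` mons ds i \<subseteq> mons ds j"
    and "mon_complement ds ` mons ds j \<subseteq> mons ds i"
    using is_mon sum_list_mon_complement ij by (fastforce simp: mons_def)+
qed

lemma lin_mult_middle_bij:
  fixes c :: "nat \<Rightarrow> 'k::field"
  assumes pos: "\<forall>d\<in>set ds. 0 < d" and t: "(\<Sum>d\<leftarrow>ds. d - 1) = Suc (2 * m)"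
    and wlp: "inj_on (lin_mult ds c) (graded_piece ds m) \<or>
              lin_mult ds c ` graded_piece ds m = graded_piece ds (Suc m)"
  shows "inj_on (lin_mult ds c) (graded_piece ds m)"
    and "lin_mult ds c ` graded_piece ds m = graded_piece ds (Suc m)"
proof -
  let ?E = "delta ` mons ds m :: (nat list \<Rightarrow> 'k) set"
  let ?F = "delta ` mons ds (Suc m) :: (nat list \<Rightarrow> 'k) set"
  have "card (mons ds m) = card (mons ds (Suc m))"
    using bij_betw_mon_complement[OF pos, of m "Suc m"] t by (simp add: bij_betw_same_card)
  then have "card ?E = card ?F" by (simp add: card_image inj_on_subset[OF inj_delta])
  moreover have "Vector_Spaces.linear scale_fun scale_fun (lin_mult ds c)"
    using module_hom_lin_mult by (simp add: module_hom_iff_linear)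
  moreover have "lin_mult ds c ` fun_vs.span ?E \<subseteq> fun_vs.span ?F"
    using lin_mult_graded[of _ ds m c] unfolding graded_piece_eq_span by blast
  ultimately have "inj_on (lin_mult ds c) (fun_vs.span ?E) \<longleftrightarrow> lin_mult ds c ` fun_vs.span ?E = fun_vs.span ?F"
    by (rule fun_vs.linear_inj_on_span_iff_surj[OF finite_imageI[OF finite_mons]
          finite_imageI[OF finite_mons] independent_delta independent_delta])
  then show "inj_on (lin_mult ds c) (graded_piece ds m)"
    and "lin_mult ds c ` graded_piece ds m = graded_piece ds (Suc m)"
    using wlp unfolding graded_piece_eq_span by blast+
qed

lemma lin_mult_inj_on_low_surj_high:
  fixes c :: "nat \<Rightarrow> 'k::field"
  assumes pos: "\<forall>d\<in>set ds. 0 < d" and t: "(\<Sum>d\<leftarrow>ds. d - 1) = Suc (2 * m)"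
    and wlp: "\<forall>i. inj_on (lin_mult ds c) (graded_piece ds i) \<or>
                  lin_mult ds c ` graded_piece ds i = graded_piece ds (Suc i)"
  shows "j \<le> m \<Longrightarrow> inj_on (lin_mult ds c) (graded_piece ds j)"
    and "m \<le> j \<Longrightarrow> lin_mult ds c ` graded_piece ds j = graded_piece ds (Suc j)"
proof -
  note middle = lin_mult_middle_bij[OF pos t wlp[rule_format, of m]]
  show "inj_on (lin_mult ds c) (graded_piece ds j)" if "j \<le> m"
    using that
  proof (induction j rule: inc_induct)
    case (step n)
    then show ?case using inj_on_lin_mult_downward[of ds c n] t by simp
  qed (rule middle(1))
  show "lin_mult ds c ` graded_piece ds j = graded_piece ds (Suc j)" if "m \<le> j"
    using that
  proof (induction j rule: dec_induct)
    case (step n)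
    then show ?case using image_lin_mult_upward by blast
  qed (rule middle(2))
qed

section \<open>Adjoining a variable \<open>x\<close> with \<open>x\<^sup>d = 0\<close>\<close>

text \<open>An element \<open>f\<close> of \<open>A[x]/(x\<^sup>d)\<close> is \<open>\<Sum>\<^sub>e x\<^sup>e f\<^sub>e\<close> with \<open>f\<^sub>e = slice f e\<close> in \<open>A\<close>.\<close>

definition slice :: "(nat list \<Rightarrow> 'k) \<Rightarrow> nat \<Rightarrow> nat list \<Rightarrow> 'k" where
  "slice f e u = f (u @ [e])"

definition from_slices :: "(nat list \<Rightarrow> 'k::zero) \<Rightarrow> (nat list \<Rightarrow> 'k) \<Rightarrow> nat list \<Rightarrow> 'k" where
  "from_slices a b v =
     (if v \<noteq> [] \<and> last v = 0 then a (butlast v) else if v \<noteq> [] \<and> last v = 1 then b (butlast v) else 0)"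

lemma slice_from_slices [simp]:
  "slice (from_slices a b) e = (if e = 0 then a else if e = 1 then b else 0)"
  by (auto simp: slice_def from_slices_def fun_eq_iff)

lemma slice_zero [simp]: "slice 0 e = 0"
  by (simp add: slice_def fun_eq_iff)

lemma is_mon_append_iff: "is_mon (ds @ [d]) (u @ [e]) \<longleftrightarrow> is_mon ds u \<and> e < d"
  by (auto simp: is_mon_def nth_append less_Suc_eq)

lemma is_mon_appendE:
  assumes "is_mon (ds @ [d]) v"
  obtains u e where "v = u @ [e]" and "e < d" and "is_mon ds u"
proof -
  have "v \<noteq> []" using assms by (auto simp: is_mon_def)
  then have "v = butlast v @ [last v]" by simp
  then show ?thesis using assms that is_mon_append_iff by metis
qed

lemma slice_graded:
  assumes "f \<in> graded_piece (ds @ [d]) i" shows "slice f e \<in> graded_piece ds (i - e)"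
  unfolding graded_piece_def mem_Collect_eq
proof (intro allI impI)
  fix u assume "u \<notin> mons ds (i - e)"
  then have "u @ [e] \<notin> mons (ds @ [d]) i" by (auto simp: mons_def is_mon_append_iff)
  then show "slice f e u = 0" using assms by (simp add: graded_piece_def slice_def)
qed

lemma graded_piece_append_eqI:
  assumes "f \<in> graded_piece (ds @ [d]) i" and "g \<in> graded_piece (ds @ [d]) j"
    and "\<And>e. e < d \<Longrightarrow> slice f e = slice g e"
  shows "f = g"
proof
  fix v
  show "f v = g v"
  proof (cases "is_mon (ds @ [d]) v")
    case True
    then obtain u e where "v = u @ [e]" "e < d" by (rule is_mon_appendE)
    then show ?thesis using assms(3) by (simp add: slice_def fun_eq_iff)
  next
    case False
    then show ?thesis using assms(1,2) by (simp add: graded_piece_def mons_def)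
  qed
qed

lemma from_slices_graded:
  assumes "a \<in> graded_piece ds (Suc i)" and "b \<in> graded_piece ds i"
  shows "from_slices a b \<in> graded_piece (ds @ [2]) (Suc i)"
  unfolding graded_piece_def mem_Collect_eq
proof (intro allI impI)
  fix v assume v: "v \<notin> mons (ds @ [2]) (Suc i)"
  show "from_slices a b v = 0"
  proof (cases "v = []")
    case False
    then obtain u e where "v = u @ [e]" by (metis append_butlast_last_id)
    then show ?thesis
      using v assms by (auto simp: from_slices_def graded_piece_def mons_def is_mon_append_iff)
  qed (simp add: from_slices_def)
qed

text \<open>Multiplication by \<open>\<ell> + x\<close>, where the new variable has index \<open>length ds\<close>.\<close>

lemma lin_mult_append:
  "lin_mult (ds @ [d]) (c(length ds := 1)) f (u @ [e]) =
    (if is_mon ds u \<and> e < d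
     then lin_mult ds c (slice f e) u + (if 0 < e then f (u @ [e - 1]) else 0) else 0)"
proof (cases "is_mon ds u \<and> e < d")
  case True
  then have lu: "length u = length ds" by (simp add: is_mon_def)
  have "(\<Sum>j<length ds. if 0 < (u @ [e]) ! j
           then (c(length ds := 1)) j * f ((u @ [e])[j := (u @ [e]) ! j - 1]) else 0)
      = (\<Sum>j<length ds. if 0 < u ! j then c j * f (u[j := u ! j - 1] @ [e]) else 0)"
    by (rule sum.cong[OF refl]) (simp add: lu nth_append list_update_append1)
  moreover have "(u @ [e])[length ds := e - 1] = u @ [e - 1]"
    using lu by (simp add: list_update_append)
  moreover have "lin_mult ds c (slice f e) u
      = (\<Sum>j<length ds. if 0 < u ! j then c j * f (u[j := u ! j - 1] @ [e]) else 0)"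
    using True unfolding lin_mult_def slice_def by simp
  ultimately show ?thesis
    using True lu by (simp add: lin_mult_def is_mon_append_iff nth_append)
next
  case False
  then have "\<not> is_mon (ds @ [d]) (u @ [e])" by (simp add: is_mon_append_iff)
  then show ?thesis by (simp only: lin_mult_def[of "ds @ [d]"] if_not_P[OF False] if_False)
qed

lemma slice_lin_mult_append_0:
  "0 < d \<Longrightarrow> slice (lin_mult (ds @ [d]) (c(length ds := 1)) f) 0 = lin_mult ds c (slice f 0)"
  by (auto simp: fun_eq_iff slice_def lin_mult_append) (simp add: lin_mult_def)

lemma slice_lin_mult_append_Suc:
  assumes "Suc e < d" and "f \<in> graded_piece (ds @ [d]) i"
  shows "slice (lin_mult (ds @ [d]) (c(length ds := 1)) f) (Suc e)
           = lin_mult ds c (slice f (Suc e)) + slice f e"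
proof
  fix u
  have "\<not> is_mon ds u \<Longrightarrow> f (u @ [e]) = 0"
    using assms by (auto simp: graded_piece_def mons_def is_mon_append_iff)
  then show "slice (lin_mult (ds @ [d]) (c(length ds := 1)) f) (Suc e) u
      = (lin_mult ds c (slice f (Suc e)) + slice f e) u"
    using assms(1) by (auto simp: slice_def lin_mult_append) (simp add: lin_mult_def)
qed

lemma inj_on_lin_mult_append:
  fixes c :: "nat \<Rightarrow> 'k::field"
  assumes inj: "inj_on (lin_mult ds c) (graded_piece ds i)"
    and inj_pred: "inj_on (lin_mult ds c) (graded_piece ds (i - 1))"
  shows "inj_on (lin_mult (ds @ [2]) (c(length ds := 1))) (graded_piece (ds @ [2]) i)"
proof -
  interpret L: module_hom scale_fun scale_fun "lin_mult ds c" by (rule module_hom_lin_mult)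
  interpret L': module_hom scale_fun scale_fun "lin_mult (ds @ [2]) (c(length ds := 1))"
    by (rule module_hom_lin_mult)
  have kernel: "g = 0" if "g \<in> graded_piece ds j" "lin_mult ds c g = 0"
    and "inj_on (lin_mult ds c) (graded_piece ds j)" for g j
    using that L.inj_on_iff_eq_0[OF graded_piece_subspace] by blast
  have "f = 0" if f: "f \<in> graded_piece (ds @ [2]) i"
    and f0: "lin_mult (ds @ [2]) (c(length ds := 1)) f = 0" for f
  proof -
    have "lin_mult ds c (slice f 0) = slice (lin_mult (ds @ [2]) (c(length ds := 1)) f) 0"
      by (simp add: slice_lin_mult_append_0)
    also have "\<dots> = 0" by (simp add: f0)
    finally have "lin_mult ds c (slice f 0) = 0" .
    then have a0: "slice f 0 = 0" using kernel[OF _ _ inj] slice_graded[OF f, of 0] by simp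
    have "lin_mult ds c (slice f 1) + slice f 0 = slice (lin_mult (ds @ [2]) (c(length ds := 1)) f) 1"
      using slice_lin_mult_append_Suc[OF _ f, of 0 c] by simp
    then have "lin_mult ds c (slice f 1) = 0" by (simp add: f0 a0)
    then have b0: "slice f 1 = 0" using kernel[OF _ _ inj_pred] slice_graded[OF f, of 1] by simp
    show "f = 0"
    proof (rule graded_piece_append_eqI[OF f fun_vs.subspace_0[OF graded_piece_subspace]])
      fix e :: nat assume "e < 2"
      then show "slice f e = slice 0 e" using a0 b0 by (auto simp: less_2_cases_iff)
    qed
  qed
  then show ?thesis using L'.inj_on_iff_eq_0[OF graded_piece_subspace] by blast
qed

lemma image_lin_mult_append:
  fixes c :: "nat \<Rightarrow> 'k::field"
  assumes surj: "lin_mult ds c ` graded_piece ds i = graded_piece ds (Suc i)"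
    and surj_Suc: "lin_mult ds c ` graded_piece ds (Suc i) = graded_piece ds (Suc (Suc i))"
  shows "lin_mult (ds @ [2]) (c(length ds := 1)) ` graded_piece (ds @ [2]) (Suc i)
           = graded_piece (ds @ [2]) (Suc (Suc i))"
proof
  interpret L: module_hom scale_fun scale_fun "lin_mult ds c" by (rule module_hom_lin_mult)
  show "lin_mult (ds @ [2]) (c(length ds := 1)) ` graded_piece (ds @ [2]) (Suc i)
          \<subseteq> graded_piece (ds @ [2]) (Suc (Suc i))"
    using lin_mult_graded by blast
  show "graded_piece (ds @ [2]) (Suc (Suc i))
          \<subseteq> lin_mult (ds @ [2]) (c(length ds := 1)) ` graded_piece (ds @ [2]) (Suc i)"
  proof
    fix g :: "nat list \<Rightarrow> 'k" assume g: "g \<in> graded_piece (ds @ [2]) (Suc (Suc i))"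
    define p where "p = slice g 0"
    define q where "q = slice g 1"
    have p: "p \<in> graded_piece ds (Suc (Suc i))" and q: "q \<in> graded_piece ds (Suc i)"
      unfolding p_def q_def using slice_graded[OF g, of 0] slice_graded[OF g, of 1] by simp_all
    have "lin_mult ds c q - p \<in> graded_piece ds (Suc (Suc i))"
      by (rule fun_vs.subspace_diff[OF graded_piece_subspace lin_mult_graded[OF q] p])
    then obtain y where y: "y \<in> graded_piece ds (Suc i)" "lin_mult ds c y = lin_mult ds c q - p"
      using surj_Suc by (metis imageE)
    then obtain b where b: "b \<in> graded_piece ds i" "lin_mult ds c b = y"
      using surj by (metis imageE)
    define a where "a = q - lin_mult ds c b"
    have a: "a \<in> graded_piece ds (Suc i)"
      unfolding a_def using fun_vs.subspace_diff[OF graded_piece_subspace q lin_mult_graded[OF b(1)]] .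
    have La: "lin_mult ds c a = p" unfolding a_def using L.diff b y by simp
    define f where "f = from_slices a b"
    have f: "f \<in> graded_piece (ds @ [2]) (Suc i)" unfolding f_def by (rule from_slices_graded[OF a b(1)])
    have "lin_mult (ds @ [2]) (c(length ds := 1)) f = g"
    proof (rule graded_piece_append_eqI[OF lin_mult_graded[OF f] g])
      fix e :: nat assume "e < 2"
      then consider "e = 0" | "e = 1" by linarith
      then show "slice (lin_mult (ds @ [2]) (c(length ds := 1)) f) e = slice g e"
      proof cases
        case 1
        then show ?thesis using slice_lin_mult_append_0[of 2 ds c f] La by (simp add: f_def p_def)
      next
        case 2
        then show ?thesis using slice_lin_mult_append_Suc[OF _ f, of 0 c] by (simp add: f_def a_def q_def)
      qed
    qed
    then show "g \<in> lin_mult (ds @ [2]) (c(length ds := 1)) ` graded_piece (ds @ [2]) (Suc i)"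
      using f by blast
  qed
qed

theorem proposition4p13:
  fixes ds :: "nat list"
  assumes "\<forall>d\<in>set ds. 0 < d"
    and "odd (\<Sum>d\<leftarrow>ds. d - 1)"
    and "has_WLP TYPE('k::field) ds"
  shows "has_WLP TYPE('k) (ds @ [2])"
proof -
  obtain c :: "nat \<Rightarrow> 'k" where wlp: "\<forall>i. inj_on (lin_mult ds c) (graded_piece ds i) \<or>
        lin_mult ds c ` graded_piece ds i = graded_piece ds (Suc i)"
    using assms(3) unfolding has_WLP_def by blast
  obtain m where t: "(\<Sum>d\<leftarrow>ds. d - 1) = Suc (2 * m)" using assms(2) oddE by fastforce
  note low = lin_mult_inj_on_low_surj_high(1)[OF assms(1) t wlp]
  note high = lin_mult_inj_on_low_surj_high(2)[OF assms(1) t wlp]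
  have "inj_on (lin_mult (ds @ [2]) (c(length ds := 1))) (graded_piece (ds @ [2]) i) \<or>
        lin_mult (ds @ [2]) (c(length ds := 1)) ` graded_piece (ds @ [2]) i
          = graded_piece (ds @ [2]) (Suc i)" for i
  proof (cases "i \<le> m")
    case True
    then show ?thesis by (intro disjI1 inj_on_lin_mult_append low) auto
  next
    case False
    then obtain j where j: "i = Suc j" "m \<le> j" by (cases i) auto
    then have "lin_mult (ds @ [2]) (c(length ds := 1)) ` graded_piece (ds @ [2]) (Suc j)
        = graded_piece (ds @ [2]) (Suc (Suc j))"
      by (intro image_lin_mult_append high) auto
    then show ?thesis using j by simp
  qed
  then show ?thesis unfolding has_WLP_def by blast
qed

end
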